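(* For every $\alpha>-1$ and every $z>0$, $$|I_\alpha(z)-I_{\alpha+1}(z)|<(4\alpha+6)\frac{I_{\alpha+1}(z)}{z}.$$
   Context: $I_\alpha(z)=\sum_{k=0}^\infty\frac{(z/2)^{\alpha+2k}}{k!\,\Gamma(\alpha+k+1)}$ is the modified Bessel function of the first kind of order $\alpha>-1$. *)

theory Defs
  imports "HOL-Analysis.Analysis"
begin

definition besselI :: "real \<Rightarrow> real \<Rightarrow> real" where
  "besselI a z = (\<Sum>k. (z / 2) powr (a + 2 * real k) / (fact k * Gamma (a + real k + 1)))"

end

theory Submission
  imports Defs
begin

text \<open>Comparing coefficients in the series gives the recurrence
  I_a = 2(a+1)/z I_(a+1) + I_(a+2), and AM-GM shows that for a \<ge> 0 the k-th term of I_(a+1) is at most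
  the mean of the k-th and (k+1)-st terms of I_a, whence I_(a+1) < I_a. Together with I_(a+2) < I_(a+1),
  the recurrence bounds I_a - I_(a+1) above by 2(a+1)/z I_(a+1); at order a+1, together with
  I_(a+3) < I_(a+2), it bounds I_(a+1) - I_a \<le> I_(a+1) - I_(a+2) by 2(a+2)/z I_(a+1).\<close>

definition besselI_term :: "real \<Rightarrow> real \<Rightarrow> nat \<Rightarrow> real" where
  "besselI_term a z k = (z / 2) powr (a + 2 * real k) / (fact k * Gamma (a + real k + 1))"

lemma besselI_eq_suminf: "besselI a z = (\<Sum>k. besselI_term a z k)"
  unfolding besselI_def besselI_term_def ..

lemma besselI_term_pos:
  assumes "a > -1" "z > 0"
  shows "besselI_term a z k > 0"
  unfolding besselI_term_def using assms by (intro divide_pos_pos mult_pos_pos Gamma_real_pos) auto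

lemma Gamma_plus1_pos: "(s::real) > 0 \<Longrightarrow> Gamma (s + 1) = s * Gamma s"
  by (rule Gamma_plus1) (auto simp: nonpos_Ints_def)

lemma besselI_term_Suc:
  assumes "a > -1" "z > 0"
  shows "besselI_term a z (Suc k) =
           besselI_term a z k * (z / 2)\<^sup>2 / ((real k + 1) * (a + real k + 1))"
proof -
  have Gamma: "Gamma (a + real (Suc k) + 1) = (a + real k + 1) * Gamma (a + real k + 1)"
    using Gamma_plus1_pos[of "a + real k + 1"] assms by (simp add: add_ac)
  have powr: "(z / 2) powr (a + 2 * real (Suc k)) = (z / 2) powr (a + 2 * real k) * (z / 2)\<^sup>2"
    using assms by (simp add: powr_add)
  have fact: "fact (Suc k) = (real k + 1) * fact k"
    by (simp add: algebra_simps)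
  have "Gamma (a + real k + 1) > 0"
    using assms by (intro Gamma_real_pos) auto
  then show ?thesis
    using assms unfolding besselI_term_def Gamma powr fact by (simp add: field_simps)
qed

lemma besselI_term_order_Suc:
  assumes "a > -1" "z > 0"
  shows "besselI_term (a + 1) z k = besselI_term a z k * (z / 2) / (a + real k + 1)"
proof -
  have Gamma: "Gamma (a + 1 + real k + 1) = (a + real k + 1) * Gamma (a + real k + 1)"
    using Gamma_plus1_pos[of "a + real k + 1"] assms by (simp add: add_ac)
  have powr: "(z / 2) powr (a + 1 + 2 * real k) = (z / 2) powr (a + 2 * real k) * (z / 2)"
    using assms by (simp add: powr_add)
  have "Gamma (a + real k + 1) > 0"
    using assms by (intro Gamma_real_pos) auto
  then show ?thesis
    using assms unfolding besselI_term_def Gamma powr by (simp add: field_simps)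
qed

lemma besselI_term_order_add2:
  assumes "a > -1" "z > 0"
  shows "besselI_term (a + 2) z k = besselI_term a z (Suc k) * (real k + 1) / (a + real k + 2)"
proof -
  have Gamma: "Gamma (a + 2 + real k + 1) = (a + real k + 2) * Gamma (a + real (Suc k) + 1)"
    using Gamma_plus1_pos[of "a + real k + 2"] assms by (simp add: add_ac)
  have powr: "a + 2 + 2 * real k = a + 2 * real (Suc k)"
    by simp
  have fact: "fact (Suc k) = (real k + 1) * fact k"
    by (simp add: algebra_simps)
  have "Gamma (a + real (Suc k) + 1) > 0"
    using assms by (intro Gamma_real_pos) auto
  then show ?thesis
    using assms unfolding besselI_term_def Gamma powr fact by (simp add: divide_simps)
qed

lemma summable_besselI_term:
  assumes "a > -1" "z > 0"
  shows "summable (besselI_term a z)"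
proof (rule summable_ratio_test[where c = "1/2" and N = "nat \<lceil>z\<rceil>"])
  fix k assume "nat \<lceil>z\<rceil> \<le> k"
  then have "z * z \<le> (real k + 1) * (a + real k + 1)"
    using assms by (intro mult_mono) auto
  moreover have "(real k + 1) * (a + real k + 1) > 0"
    using assms by simp
  ultimately have ratio: "(z / 2)\<^sup>2 / ((real k + 1) * (a + real k + 1)) \<le> 1 / 2"
    by (simp add: divide_simps power2_eq_square)
  have "besselI_term a z (Suc k) \<le> besselI_term a z k * (1 / 2)"
    using mult_left_mono[OF ratio less_imp_le[OF besselI_term_pos[OF assms]]]
    by (simp add: besselI_term_Suc[OF assms])
  then show "norm (besselI_term a z (Suc k)) \<le> 1 / 2 * norm (besselI_term a z k)"
    using besselI_term_pos[OF assms] by (simp add: less_imp_le)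
qed simp

lemma besselI_term_sums:
  "a > -1 \<Longrightarrow> z > 0 \<Longrightarrow> besselI_term a z sums besselI a z"
  unfolding besselI_eq_suminf by (intro summable_sums summable_besselI_term)

lemma besselI_pos: "a > -1 \<Longrightarrow> z > 0 \<Longrightarrow> besselI a z > 0"
  unfolding besselI_eq_suminf by (intro suminf_pos summable_besselI_term besselI_term_pos)

lemma besselI_term_recurrence:
  assumes "a > -1" "z > 0"
  shows "besselI_term a z k = 2 * (a + 1) / z * besselI_term (a + 1) z k
           + (if k = 0 then 0 else besselI_term (a + 2) z (k - 1))"
proof (cases k)
  case 0
  then show ?thesis
    unfolding besselI_term_order_Suc[OF assms] using assms by simp
next
  case (Suc j)
  have "a + real j + 2 > 0" using assms by simp
  then show ?thesis
    unfolding Suc diff_Suc_1 besselI_term_order_Suc[OF assms] besselI_term_order_add2[OF assms]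
    using assms by (simp add: divide_simps) (simp add: algebra_simps)
qed

lemma besselI_recurrence:
  assumes "a > -1" "z > 0"
  shows "besselI a z = 2 * (a + 1) / z * besselI (a + 1) z + besselI (a + 2) z"
proof -
  define tail where "tail k = (if k = 0 then 0 else besselI_term (a + 2) z (k - 1))" for k
  have "(\<lambda>k. 2 * (a + 1) / z * besselI_term (a + 1) z k) sums (2 * (a + 1) / z * besselI (a + 1) z)"
    using assms by (intro sums_mult besselI_term_sums) auto
  moreover have "tail sums besselI (a + 2) z"
    using besselI_term_sums[of "a + 2" z] assms sums_Suc_iff[of tail] by (simp add: tail_def)
  ultimately have "(\<lambda>k. 2 * (a + 1) / z * besselI_term (a + 1) z k + tail k)
                     sums (2 * (a + 1) / z * besselI (a + 1) z + besselI (a + 2) z)"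
    by (rule sums_add)
  moreover have "(\<lambda>k. 2 * (a + 1) / z * besselI_term (a + 1) z k + tail k) = besselI_term a z"
    using besselI_term_recurrence[OF assms] by (simp add: tail_def fun_eq_iff)
  ultimately have "besselI_term a z sums (2 * (a + 1) / z * besselI (a + 1) z + besselI (a + 2) z)"
    by simp
  with besselI_term_sums[OF assms] show ?thesis
    by (rule sums_unique2)
qed

lemma besselI_term_order_Suc_le_mean:
  assumes "a \<ge> 0" "z > 0"
  shows "besselI_term (a + 1) z k \<le> (besselI_term a z k + besselI_term a z (Suc k)) / 2"
proof -
  have "a > -1" using assms by simp
  define x m n where "x = z / 2" and "m = real k + 1" and "n = a + real k + 1"
  have "m > 0" "m \<le> n" "x > 0"
    using assms by (auto simp: x_def m_def n_def)
  have "2 * x * m \<le> x\<^sup>2 + m * m"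
    using sum_squares_ge_zero[of "x - m" 0] by (simp add: power2_eq_square algebra_simps)
  also have "\<dots> \<le> x\<^sup>2 + m * n"
    using \<open>m > 0\<close> \<open>m \<le> n\<close> by simp
  finally have "x / n \<le> (1 + x\<^sup>2 / (m * n)) / 2"
    using \<open>m > 0\<close> \<open>m \<le> n\<close> by (simp add: divide_simps)
  then have "besselI_term a z k * (x / n) \<le> besselI_term a z k * ((1 + x\<^sup>2 / (m * n)) / 2)"
    using besselI_term_pos[of a z k] assms by (intro mult_left_mono) auto
  moreover have "besselI_term (a + 1) z k = besselI_term a z k * (x / n)"
    and "besselI_term a z (Suc k) = besselI_term a z k * (x\<^sup>2 / (m * n))"
    using \<open>a > -1\<close> assms by (simp_all add: besselI_term_order_Suc besselI_term_Suc x_def m_def n_def)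
  ultimately show ?thesis
    by (simp add: ring_distribs)
qed

lemma besselI_order_Suc_less:
  assumes "a \<ge> 0" "z > 0"
  shows "besselI (a + 1) z < besselI a z"
proof -
  have "a > -1" "a + 1 > -1" using assms by auto
  note sums = besselI_term_sums[OF \<open>a > -1\<close> \<open>z > 0\<close>]
  have "(\<lambda>k. besselI_term a z (Suc k)) sums (besselI a z - besselI_term a z 0)"
    using sums by (simp add: sums_Suc_iff)
  with sums have "(\<lambda>k. (besselI_term a z k + besselI_term a z (Suc k)) / 2)
                    sums ((besselI a z + (besselI a z - besselI_term a z 0)) / 2)"
    by (intro sums_divide sums_add)
  with besselI_term_order_Suc_le_mean[OF assms] besselI_term_sums[OF \<open>a + 1 > -1\<close> \<open>z > 0\<close>]
  have "besselI (a + 1) z \<le> (besselI a z + (besselI a z - besselI_term a z 0)) / 2"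
    by (rule sums_le)
  then show ?thesis
    using besselI_term_pos[OF \<open>a > -1\<close> \<open>z > 0\<close>, of 0] by simp
qed

theorem mainTheorem12:
  fixes \<alpha> z :: real
  assumes "\<alpha> > -1" and "z > 0"
  shows "\<bar>besselI \<alpha> z - besselI (\<alpha> + 1) z\<bar> < (4 * \<alpha> + 6) * besselI (\<alpha> + 1) z / z"
proof -
  let ?I = "\<lambda>b. besselI (\<alpha> + b) z"
  have rec0: "besselI \<alpha> z = 2 * (\<alpha> + 1) / z * ?I 1 + ?I 2"
    using besselI_recurrence[OF assms] .
  have rec1: "?I 1 = 2 * (\<alpha> + 2) / z * ?I 2 + ?I 3"
    using besselI_recurrence[of "\<alpha> + 1" z] assms by (simp add: add_ac)
  have dec: "?I 2 < ?I 1" "?I 3 < ?I 2"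
    using besselI_order_Suc_less[of "\<alpha> + 1" z] besselI_order_Suc_less[of "\<alpha> + 2" z] assms
    by (simp_all add: add_ac)
  have "2 * (\<alpha> + 1) / z * ?I 1 \<ge> 0"
    using besselI_pos[of "\<alpha> + 1" z] assms by simp
  moreover have "2 * (\<alpha> + 2) / z * ?I 2 \<le> 2 * (\<alpha> + 2) / z * ?I 1"
    using dec assms by (intro mult_left_mono) auto
  moreover have "(4 * \<alpha> + 6) * ?I 1 / z = 2 * (\<alpha> + 1) / z * ?I 1 + 2 * (\<alpha> + 2) / z * ?I 1"
    using assms by (simp add: field_simps)
  ultimately show ?thesis
    using rec0 rec1 dec by linarith
qed

end
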